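(* Let $\alpha\in\mathbb R$ and consider the system $$\frac{d}{dt}v_n=-n^2v_n+\alpha v_n-2v_n\|v\|_H^2+v_n|v_n|^2,\quad n\in\mathbb Z,$$ for $v=\sum_nv_ne_n\in H$. The set $\mathcal R$ of its equilibria consists of $v=0$ and of those $v\ne0$ whose nonzero components satisfy the following: with $N_0:=\#\{n:v_n\ne0\}$ and $N_2:=\sum_{n:v_n\ne0}n^2$, $$\|v\|_H^2=\frac{N_0}{2N_0-1}\alpha-\frac{N_2}{2N_0-1}>0,\qquad |v_n|^2=n^2+\frac{\alpha-2N_2}{2N_0-1}>0\ \text{ for } v_n\ne0;$$ and every sequence $(v_n)$ satisfying these conditions gives an equilibrium. Moreover, a nonzero equilibrium $v$ is not hyperbolic if and only if $k^2+\frac{\alpha-2N_2}{2N_0-1}=0$ for some $k$ with $v_k=0$. The zero equilibrium is hyperbolic if and only if $\alpha\ne k^2$ for all $k\in\mathbb Z$. In particular, all equilibria are hyperbolic if $\alpha\notin\mathbb Z$.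
   Context: $e_n=e^{inx}$, $H=L^2_{per}(-\pi,\pi)$ complex-valued with $\|v\|_H^2=\sum|v_n|^2$. The system is invariant under $v_n\mapsto e^{i\phi_n}v_n$ ($\phi_n\in\mathbb R$), so each equilibrium generates a torus of equilibria and can be rotated to a real equilibrium (all $v_n\in\mathbb R$); the real subspace $\{v_n\in\mathbb R\ \forall n\}$ is invariant. Hyperbolicity of an equilibrium $v$ (normal hyperbolicity of its torus) is understood via the real system: for a real equilibrium $v$, the linearization on real perturbations $\theta$ is $\frac d{dt}\theta_n=-n^2\theta_n+\alpha\theta_n-2\theta_n\|v\|_H^2-4v_n(v,\theta)+3\theta_nv_n^2$, and $v$ is hyperbolic iff this linear operator has no zero eigenvalue (nontrivial kernel). *)

theory Defs
  imports "HOL-Analysis.Analysis"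
begin

text \<open>Elements of H = L^2_per(-pi,pi) are represented by their Fourier
  coefficient sequences v :: int => complex, with square-summable moduli.\<close>

definition inH :: "(int \<Rightarrow> 'a::real_normed_vector) \<Rightarrow> bool" where
  "inH v \<longleftrightarrow> (\<lambda>n. (norm (v n))\<^sup>2) summable_on UNIV"

definition normH2 :: "(int \<Rightarrow> 'a::real_normed_vector) \<Rightarrow> real" where
  "normH2 v = (\<Sum>\<^sub>\<infinity>n. (norm (v n))\<^sup>2)"

definition equilibrium :: "real \<Rightarrow> (int \<Rightarrow> complex) \<Rightarrow> bool" where
  "equilibrium \<alpha> v \<longleftrightarrow> inH v \<and>
     (\<forall>n. - (of_int n)\<^sup>2 * v n + of_real \<alpha> * v n - 2 * v n * of_real (normH2 v)
           + v n * of_real ((cmod (v n))\<^sup>2) = 0)"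

definition supp :: "(int \<Rightarrow> complex) \<Rightarrow> int set" where
  "supp v = {n. v n \<noteq> 0}"

definition N0 :: "(int \<Rightarrow> complex) \<Rightarrow> real" where
  "N0 v = real (card (supp v))"

definition N2 :: "(int \<Rightarrow> complex) \<Rightarrow> real" where
  "N2 v = (\<Sum>n\<in>supp v. (real_of_int n)\<^sup>2)"

definition lin_op :: "real \<Rightarrow> (int \<Rightarrow> real) \<Rightarrow> (int \<Rightarrow> real) \<Rightarrow> int \<Rightarrow> real" where
  "lin_op \<alpha> w \<theta> n = - (of_int n)\<^sup>2 * \<theta> n + \<alpha> * \<theta> n - 2 * \<theta> n * normH2 w
      - 4 * w n * (\<Sum>\<^sub>\<infinity>m. w m * \<theta> m) + 3 * \<theta> n * (w n)\<^sup>2"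

definition real_hyperbolic :: "real \<Rightarrow> (int \<Rightarrow> real) \<Rightarrow> bool" where
  "real_hyperbolic \<alpha> w \<longleftrightarrow>
     \<not> (\<exists>\<theta>. inH \<theta> \<and> \<theta> \<noteq> (\<lambda>_. 0) \<and> (\<forall>n. lin_op \<alpha> w \<theta> n = 0))"

text \<open>A (complex) equilibrium is hyperbolic iff the real equilibria on its torus
  (obtained by rotations v_n -> e^{i phi_n} v_n) are hyperbolic.\<close>
definition hyperbolic :: "real \<Rightarrow> (int \<Rightarrow> complex) \<Rightarrow> bool" where
  "hyperbolic \<alpha> v \<longleftrightarrow>
     (\<forall>w::int \<Rightarrow> real. (\<exists>\<phi>::int \<Rightarrow> real. \<forall>n. v n = cis (\<phi> n) * of_real (w n))
        \<longrightarrow> real_hyperbolic \<alpha> w)"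

end

theory Submission
  imports Defs
begin

text \<open>At an equilibrium every active mode satisfies |v_n|^2 = n^2 - alpha + 2|v|^2, and the right-hand
  side is the decay rate of mode n in the linearisation. Since |v_n|^2 \<le> |v|^2, only finitely many
  modes are active, and summing the relation over them determines |v|^2 from N_0 and N_2.
  In the linearisation at a real equilibrium w an active row reads w_n (2 w_n theta_n - 4 (w,theta)),
  so w_n theta_n = 2 (w,theta) on the support; summing gives (w,theta) = 2 N_0 (w,theta), hence
  (w,theta) = 0 and theta vanishes on the support. On the inactive modes the linearisation is
  diagonal with entries minus the decay rates, so its kernel is trivial iff no inactive mode has
  decay rate zero. The rotations of the torus preserve moduli, hence all these quantities.\<close>

definition decay_rate :: "real \<Rightarrow> (int \<Rightarrow> 'a::real_normed_vector) \<Rightarrow> int \<Rightarrow> real" where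
  "decay_rate \<alpha> v n = (real_of_int n)\<^sup>2 - \<alpha> + 2 * normH2 v"

lemma has_sum_finite_support:
  fixes f :: "'a \<Rightarrow> 'b::{comm_monoid_add, topological_space}"
  assumes "finite F" "\<And>x. x \<notin> F \<Longrightarrow> f x = 0"
  shows "(f has_sum sum f F) UNIV"
  using has_sum_cong_neutral[of F UNIV f f] assms by auto

lemma infsum_finite_support:
  fixes f :: "'a \<Rightarrow> 'b::{comm_monoid_add, t2_space}"
  assumes "finite F" "\<And>x. x \<notin> F \<Longrightarrow> f x = 0"
  shows "infsum f UNIV = sum f F"
  using has_sum_finite_support[OF assms] by (rule infsumI)

lemma summable_on_finite_support:
  fixes f :: "'a \<Rightarrow> 'b::{comm_monoid_add, topological_space}"
  assumes "finite F" "\<And>x. x \<notin> F \<Longrightarrow> f x = 0"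
  shows "f summable_on UNIV"
  using has_sum_finite_support[OF assms] by (rule has_sum_imp_summable)

lemma norm_le_normH2:
  assumes "inH v"
  shows "(norm (v n))\<^sup>2 \<le> normH2 v"
  using infsum_mono2[of "\<lambda>n. (norm (v n))\<^sup>2" "{n}" UNIV] assms
  by (simp add: inH_def normH2_def)

lemma normH2_finite_supp:
  assumes "finite (supp v)"
  shows "normH2 v = (\<Sum>n\<in>supp v. (cmod (v n))\<^sup>2)"
  unfolding normH2_def by (rule infsum_finite_support[OF assms]) (simp add: supp_def)

lemma inH_finite_supp:
  assumes "finite (supp v)"
  shows "inH v"
  unfolding inH_def by (rule summable_on_finite_support[OF assms]) (simp add: supp_def)

lemma finite_int_square_le: "finite {n::int. (real_of_int n)\<^sup>2 \<le> c}"
proof (rule finite_subset)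
  show "{n::int. (real_of_int n)\<^sup>2 \<le> c} \<subseteq> {-\<lceil>c\<rceil>..\<lceil>c\<rceil>}"
  proof
    fix n :: int assume "n \<in> {n. (real_of_int n)\<^sup>2 \<le> c}"
    moreover have "\<bar>n\<bar> \<le> \<bar>n\<bar>\<^sup>2"
    proof (cases "n = 0")
      case False
      then show ?thesis by (intro self_le_power) auto
    qed simp
    then have "\<bar>real_of_int n\<bar> \<le> (real_of_int n)\<^sup>2"
      by (metis of_int_abs of_int_le_iff of_int_power power2_abs)
    ultimately have "\<bar>real_of_int n\<bar> \<le> c" by simp
    then show "n \<in> {-\<lceil>c\<rceil>..\<lceil>c\<rceil>}" by (auto simp: abs_le_iff) linarith+
  qed
qed simp

lemma equilibrium_iff:
  "equilibrium \<alpha> v \<longleftrightarrow> inH v \<and> (\<forall>n. v n \<noteq> 0 \<longrightarrow> (cmod (v n))\<^sup>2 = decay_rate \<alpha> v n)"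
proof -
  have "- (of_int n)\<^sup>2 * v n + of_real \<alpha> * v n - 2 * v n * of_real (normH2 v)
          + v n * of_real ((cmod (v n))\<^sup>2)
        = v n * of_real ((cmod (v n))\<^sup>2 - decay_rate \<alpha> v n)" for n
    by (simp add: decay_rate_def algebra_simps)
  then show ?thesis
    unfolding equilibrium_def by (auto simp only: mult_eq_0_iff of_real_eq_0_iff right_minus_eq)
qed

lemma finite_supp_equilibrium:
  assumes "equilibrium \<alpha> v"
  shows "finite (supp v)"
proof (rule finite_subset)
  show "supp v \<subseteq> {n. (real_of_int n)\<^sup>2 \<le> \<alpha> - normH2 v}"
  proof
    fix n assume "n \<in> supp v"
    then have "(cmod (v n))\<^sup>2 = (real_of_int n)\<^sup>2 - \<alpha> + 2 * normH2 v"
      using assms by (simp add: equilibrium_iff supp_def decay_rate_def)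
    moreover have "(cmod (v n))\<^sup>2 \<le> normH2 v"
      using assms by (simp add: equilibrium_iff norm_le_normH2)
    ultimately show "n \<in> {n. (real_of_int n)\<^sup>2 \<le> \<alpha> - normH2 v}" by simp
  qed
qed (rule finite_int_square_le)

lemma two_of_nat_minus_one_neq_0: "2 * real n - 1 \<noteq> 0"
proof
  assume "2 * real n - 1 = 0"
  then have "real (2 * n) = real 1" by simp
  then show False unfolding of_nat_eq_iff by presburger
qed

lemma two_N0_minus_one_neq_0: "2 * N0 v - 1 \<noteq> 0"
  unfolding N0_def by (rule two_of_nat_minus_one_neq_0)

lemma normH2_equilibrium:
  assumes "equilibrium \<alpha> v"
  shows "normH2 v * (2 * N0 v - 1) = N0 v * \<alpha> - N2 v"
proof -
  have "normH2 v = (\<Sum>n\<in>supp v. (cmod (v n))\<^sup>2)"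
    by (rule normH2_finite_supp[OF finite_supp_equilibrium[OF assms]])
  also have "\<dots> = (\<Sum>n\<in>supp v. (real_of_int n)\<^sup>2 - \<alpha> + 2 * normH2 v)"
    using assms by (intro sum.cong) (auto simp: equilibrium_iff supp_def decay_rate_def)
  also have "\<dots> = N2 v - N0 v * \<alpha> + 2 * N0 v * normH2 v"
    by (simp add: sum.distrib sum_subtractf N2_def N0_def)
  finally show ?thesis by (simp add: algebra_simps)
qed

lemma decay_rate_eq_N0_N2:
  assumes "normH2 v * (2 * N0 v - 1) = N0 v * \<alpha> - N2 v"
  shows "decay_rate \<alpha> v n = (real_of_int n)\<^sup>2 + (\<alpha> - 2 * N2 v) / (2 * N0 v - 1)"
proof -
  have "(2 * normH2 v - \<alpha>) * (2 * N0 v - 1) = \<alpha> - 2 * N2 v"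
    using assms by (simp add: algebra_simps)
  then have "2 * normH2 v - \<alpha> = (\<alpha> - 2 * N2 v) / (2 * N0 v - 1)"
    using two_N0_minus_one_neq_0 by (simp add: eq_divide_eq)
  then show ?thesis by (simp add: decay_rate_def)
qed

lemma equilibrium_characterization:
  "equilibrium \<alpha> v \<longleftrightarrow>
     (v = (\<lambda>_. 0) \<or>
      (v \<noteq> (\<lambda>_. 0) \<and> finite (supp v) \<and>
       normH2 v = N0 v / (2 * N0 v - 1) * \<alpha> - N2 v / (2 * N0 v - 1) \<and>
       N0 v / (2 * N0 v - 1) * \<alpha> - N2 v / (2 * N0 v - 1) > 0 \<and>
       (\<forall>n. v n \<noteq> 0 \<longrightarrow>
          (cmod (v n))\<^sup>2 = (real_of_int n)\<^sup>2 + (\<alpha> - 2 * N2 v) / (2 * N0 v - 1) \<and>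
          (real_of_int n)\<^sup>2 + (\<alpha> - 2 * N2 v) / (2 * N0 v - 1) > 0)))"
    (is "_ \<longleftrightarrow> _ \<or> (_ \<and> ?rhs)")
proof (cases "v = (\<lambda>_. 0)")
  case True
  then show ?thesis by (simp add: equilibrium_def inH_def)
next
  case nonzero: False
  have normH2_iff: "normH2 v = N0 v / (2 * N0 v - 1) * \<alpha> - N2 v / (2 * N0 v - 1)
      \<longleftrightarrow> normH2 v * (2 * N0 v - 1) = N0 v * \<alpha> - N2 v"
  proof -
    have "N0 v / (2 * N0 v - 1) * \<alpha> - N2 v / (2 * N0 v - 1) = (N0 v * \<alpha> - N2 v) / (2 * N0 v - 1)"
      by (simp add: diff_divide_distrib)
    then show ?thesis by (simp only:) (rule nonzero_eq_divide_eq[OF two_N0_minus_one_neq_0])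
  qed
  show ?thesis
  proof
    assume eq: "equilibrium \<alpha> v"
    have fin: "finite (supp v)" by (rule finite_supp_equilibrium[OF eq])
    have rel: "normH2 v * (2 * N0 v - 1) = N0 v * \<alpha> - N2 v"
      by (rule normH2_equilibrium[OF eq])
    have "normH2 v > 0"
      unfolding normH2_finite_supp[OF fin]
      using fin nonzero by (intro sum_pos) (auto simp: supp_def)
    moreover have "(cmod (v n))\<^sup>2 = decay_rate \<alpha> v n" if "v n \<noteq> 0" for n
      using eq that by (simp add: equilibrium_iff)
    moreover have "(cmod (v n))\<^sup>2 > 0" if "v n \<noteq> 0" for n
      using that by simp
    ultimately show "v = (\<lambda>_. 0) \<or> (v \<noteq> (\<lambda>_. 0) \<and> ?rhs)"
      using nonzero fin rel normH2_iff decay_rate_eq_N0_N2[OF rel] by auto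
  next
    assume "v = (\<lambda>_. 0) \<or> (v \<noteq> (\<lambda>_. 0) \<and> ?rhs)"
    then have fin: "finite (supp v)" and rel: "normH2 v * (2 * N0 v - 1) = N0 v * \<alpha> - N2 v"
      and modes: "\<forall>n. v n \<noteq> 0 \<longrightarrow>
          (cmod (v n))\<^sup>2 = (real_of_int n)\<^sup>2 + (\<alpha> - 2 * N2 v) / (2 * N0 v - 1)"
      using nonzero normH2_iff by auto
    show "equilibrium \<alpha> v"
      unfolding equilibrium_iff decay_rate_eq_N0_N2[OF rel]
      using inH_finite_supp[OF fin] modes by blast
  qed
qed

lemma lin_op_inactive:
  assumes "w k = 0"
  shows "lin_op \<alpha> w \<theta> k = - decay_rate \<alpha> w k * \<theta> k"
  using assms by (simp add: lin_op_def decay_rate_def algebra_simps)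

lemma lin_op_active:
  assumes "(w n)\<^sup>2 = decay_rate \<alpha> w n"
  shows "lin_op \<alpha> w \<theta> n = w n * (2 * w n * \<theta> n - 4 * (\<Sum>\<^sub>\<infinity>m. w m * \<theta> m))"
proof -
  have "lin_op \<alpha> w \<theta> n = - decay_rate \<alpha> w n * \<theta> n + 3 * \<theta> n * (w n)\<^sup>2
      - 4 * w n * (\<Sum>\<^sub>\<infinity>m. w m * \<theta> m)"
    by (simp add: lin_op_def decay_rate_def algebra_simps)
  then show ?thesis
    unfolding assms[symmetric] by (simp add: algebra_simps power2_eq_square)
qed

lemma kernel_vanishes_on_support:
  fixes w \<theta> :: "int \<Rightarrow> real"
  assumes fin: "finite {n. w n \<noteq> 0}"
    and active: "\<forall>n. w n \<noteq> 0 \<longrightarrow> (w n)\<^sup>2 = decay_rate \<alpha> w n"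
    and kernel: "\<forall>n. lin_op \<alpha> w \<theta> n = 0"
  shows "w n * \<theta> n = 0"
proof -
  define F where "F = {n. w n \<noteq> 0}"
  define P where "P = (\<Sum>\<^sub>\<infinity>m. w m * \<theta> m)"
  have active_row: "w m * \<theta> m = 2 * P" if "m \<in> F" for m
    using lin_op_active[of w m \<alpha> \<theta>] active kernel that by (simp add: F_def P_def mult.commute)
  have "P = (\<Sum>m\<in>F. w m * \<theta> m)"
    unfolding P_def F_def by (rule infsum_finite_support[OF fin]) simp
  also have "\<dots> = 2 * real (card F) * P"
    by (simp add: active_row)
  finally have "P * (2 * real (card F) - 1) = 0" by (simp add: algebra_simps)
  moreover have "2 * real (card F) - 1 \<noteq> 0" by (rule two_of_nat_minus_one_neq_0)
  ultimately have "P = 0" by simp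
  then show ?thesis using active_row by (cases "n \<in> F") (auto simp: F_def)
qed

lemma real_hyperbolic_iff:
  fixes w :: "int \<Rightarrow> real"
  assumes fin: "finite {n. w n \<noteq> 0}"
    and active: "\<forall>n. w n \<noteq> 0 \<longrightarrow> (w n)\<^sup>2 = decay_rate \<alpha> w n"
  shows "real_hyperbolic \<alpha> w \<longleftrightarrow> (\<forall>k. w k = 0 \<longrightarrow> decay_rate \<alpha> w k \<noteq> 0)"
proof -
  have "\<exists>k. w k = 0 \<and> decay_rate \<alpha> w k = 0"
    if "\<theta> \<noteq> (\<lambda>_. 0)" and kernel: "\<forall>n. lin_op \<alpha> w \<theta> n = 0" for \<theta>
  proof -
    obtain k where "\<theta> k \<noteq> 0" using \<open>\<theta> \<noteq> (\<lambda>_. 0)\<close> by auto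
    moreover have "w k = 0"
      using kernel_vanishes_on_support[OF fin active kernel, of k] \<open>\<theta> k \<noteq> 0\<close> by simp
    moreover have "decay_rate \<alpha> w k * \<theta> k = 0"
      using lin_op_inactive[of w k \<alpha> \<theta>] \<open>w k = 0\<close> kernel by simp
    ultimately show ?thesis by auto
  qed
  moreover have "\<exists>\<theta>. inH \<theta> \<and> \<theta> \<noteq> (\<lambda>_. 0) \<and> (\<forall>n. lin_op \<alpha> w \<theta> n = 0)"
    if "w k = 0" "decay_rate \<alpha> w k = 0" for k
  proof (intro exI conjI allI)
    let ?e = "\<lambda>n. if n = k then 1 else (0::real)"
    show "inH ?e"
      unfolding inH_def by (rule summable_on_finite_support[of "{k}"]) auto
    show "?e \<noteq> (\<lambda>_. 0)" by (metis one_neq_zero)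
    have "(\<Sum>\<^sub>\<infinity>m. w m * ?e m) = 0"
      using that(1) by (simp add: if_distrib cong: if_cong)
    then show "lin_op \<alpha> w ?e n = 0" for n
      using that by (auto simp: lin_op_def decay_rate_def algebra_simps)
  qed
  ultimately show ?thesis unfolding real_hyperbolic_def by blast
qed

lemma real_hyperbolic_rotation:
  assumes eq: "equilibrium \<alpha> v" and rotation: "\<forall>n. v n = cis (\<phi> n) * of_real (w n)"
  shows "real_hyperbolic \<alpha> w \<longleftrightarrow> (\<forall>k. v k = 0 \<longrightarrow> decay_rate \<alpha> v k \<noteq> 0)"
proof -
  have abs_w: "\<bar>w n\<bar> = cmod (v n)" for n
    using rotation by (simp add: norm_mult)
  then have "normH2 w = normH2 v" by (simp add: normH2_def)
  then have rate: "decay_rate \<alpha> w = decay_rate \<alpha> v" by (simp add: decay_rate_def fun_eq_iff)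
  have zero: "w n = 0 \<longleftrightarrow> v n = 0" for n
    using abs_w[of n] by auto
  have "finite {n. w n \<noteq> 0}"
    using finite_supp_equilibrium[OF eq] zero by (simp add: supp_def)
  moreover have "(w n)\<^sup>2 = decay_rate \<alpha> w n" if "w n \<noteq> 0" for n
  proof -
    have "(w n)\<^sup>2 = (cmod (v n))\<^sup>2" by (metis abs_w power2_abs)
    then show ?thesis using eq that zero rate by (simp add: equilibrium_iff)
  qed
  ultimately show ?thesis by (simp add: real_hyperbolic_iff rate zero)
qed

lemma hyperbolic_iff:
  assumes "equilibrium \<alpha> v"
  shows "hyperbolic \<alpha> v \<longleftrightarrow> (\<forall>k. v k = 0 \<longrightarrow> decay_rate \<alpha> v k \<noteq> 0)"
proof -
  have polar: "\<forall>n. v n = cis (Arg (v n)) * of_real (cmod (v n))"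
    by (metis rcis_cmod_Arg rcis_def mult.commute)
  show ?thesis
    unfolding hyperbolic_def
  proof
    assume "\<forall>w. (\<exists>\<phi>. \<forall>n. v n = cis (\<phi> n) * of_real (w n)) \<longrightarrow> real_hyperbolic \<alpha> w"
    moreover have "\<exists>\<phi>. \<forall>n. v n = cis (\<phi> n) * of_real (cmod (v n))"
      using polar by (rule exI[where x = "\<lambda>n. Arg (v n)"])
    ultimately have "real_hyperbolic \<alpha> (\<lambda>n. cmod (v n))"
      by (rule mp[OF spec[where x = "\<lambda>n. cmod (v n)"]])
    then show "\<forall>k. v k = 0 \<longrightarrow> decay_rate \<alpha> v k \<noteq> 0"
      using real_hyperbolic_rotation[OF assms polar] by simp
  qed (use real_hyperbolic_rotation[OF assms] in blast)
qed

lemma Ints_of_decay_rate_eq_0: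
  assumes "equilibrium \<alpha> v" "decay_rate \<alpha> v k = 0"
  shows "\<alpha> \<in> \<int>"
proof -
  have "\<alpha> = 2 * N2 v - (real_of_int k)\<^sup>2 * (2 * N0 v - 1)"
    using assms two_N0_minus_one_neq_0[of v]
    by (simp add: decay_rate_eq_N0_N2[OF normH2_equilibrium[OF assms(1)]] field_simps)
  moreover have "N2 v \<in> \<int>" "N0 v \<in> \<int>"
    unfolding N2_def N0_def by (intro Ints_sum Ints_power Ints_of_int Ints_of_nat)+
  ultimately show ?thesis by simp
qed

lemma not_hyperbolic_iff:
  assumes "equilibrium \<alpha> v"
  shows "\<not> hyperbolic \<alpha> v \<longleftrightarrow>
    (\<exists>k. v k = 0 \<and> (real_of_int k)\<^sup>2 + (\<alpha> - 2 * N2 v) / (2 * N0 v - 1) = 0)"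
  using assms by (simp add: hyperbolic_iff decay_rate_eq_N0_N2[OF normH2_equilibrium])

lemma hyperbolic_zero_iff: "hyperbolic \<alpha> (\<lambda>_. 0) \<longleftrightarrow> (\<forall>k. \<alpha> \<noteq> (real_of_int k)\<^sup>2)"
proof -
  have "equilibrium \<alpha> (\<lambda>_. 0)" by (simp add: equilibrium_def inH_def)
  moreover have "decay_rate \<alpha> (\<lambda>_::int. 0::complex) k = (real_of_int k)\<^sup>2 - \<alpha>" for k
    by (simp add: decay_rate_def normH2_def)
  ultimately show ?thesis by (auto simp: hyperbolic_iff)
qed

lemma hyperbolic_if_notin_Ints:
  assumes "\<alpha> \<notin> \<int>" "equilibrium \<alpha> v"
  shows "hyperbolic \<alpha> v"
  unfolding hyperbolic_iff[OF assms(2)] using assms Ints_of_decay_rate_eq_0 by blast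

theorem lemma5p1:
  fixes \<alpha> :: real
  shows
   "(\<forall>v. equilibrium \<alpha> v \<longleftrightarrow>
        (v = (\<lambda>_. 0) \<or>
         (v \<noteq> (\<lambda>_. 0) \<and> finite (supp v) \<and>
          normH2 v = N0 v / (2 * N0 v - 1) * \<alpha> - N2 v / (2 * N0 v - 1) \<and>
          N0 v / (2 * N0 v - 1) * \<alpha> - N2 v / (2 * N0 v - 1) > 0 \<and>
          (\<forall>n. v n \<noteq> 0 \<longrightarrow>
             (cmod (v n))\<^sup>2 = (real_of_int n)\<^sup>2 + (\<alpha> - 2 * N2 v) / (2 * N0 v - 1) \<and>
             (real_of_int n)\<^sup>2 + (\<alpha> - 2 * N2 v) / (2 * N0 v - 1) > 0))))
    \<and> (\<forall>v. equilibrium \<alpha> v \<and> v \<noteq> (\<lambda>_. 0) \<longrightarrow>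
        (\<not> hyperbolic \<alpha> v \<longleftrightarrow>
          (\<exists>k::int. v k = 0 \<and> (real_of_int k)\<^sup>2 + (\<alpha> - 2 * N2 v) / (2 * N0 v - 1) = 0)))
    \<and> (hyperbolic \<alpha> (\<lambda>_. 0) \<longleftrightarrow> (\<forall>k::int. \<alpha> \<noteq> (real_of_int k)\<^sup>2))
    \<and> (\<alpha> \<notin> \<int> \<longrightarrow> (\<forall>v. equilibrium \<alpha> v \<longrightarrow> hyperbolic \<alpha> v))"
  using equilibrium_characterization not_hyperbolic_iff hyperbolic_zero_iff hyperbolic_if_notin_Ints
  by blast

end
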